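(* Let $K$ be a field of characteristic zero. For $0\le i\le n$ let $E_i$ denote the injective hull of $K$ over $K[X_1,\ldots,X_i]$ (with $E_0=K$), with its natural module structure over the Weyl algebra $A_i(K)$. Then for each $c=1,\ldots,n$, \[H_i(\partial_c,\partial_{c+1},\ldots,\partial_n;E_n)=\begin{cases}0 & i>0,\\ E_{c-1}& i=0,\end{cases}\] where the isomorphism for $i=0$ is as $A_{c-1}(K)$-modules.
   Context: $E_i=\bigoplus_{r_1,\ldots,r_i\ge0}K\,\frac{1}{X_1\cdots X_iX_1^{r_1}\cdots X_i^{r_i}}$, where $X_j$ lowers $r_j$ by one (giving $0$ if $r_j=0$) and $\partial_j$ sends the basis element with exponent $r_j$ to $(-r_j-1)$ times the basis element with $r_j$ replaced by $r_j+1$. $H_i(\partial_c,\ldots,\partial_n;N)$ is the $i$-th Koszul homology of $N$ with respect to the commuting $K$-linear maps $\partial_c,\ldots,\partial_n$; it is a module over $A_{c-1}(K)=K\langle X_1,\ldots,X_{c-1},\partial_1,\ldots,\partial_{c-1}\rangle$. *)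

theory Defs
  imports Main "HOL-Library.Function_Algebras"
begin

text \<open>Elements of E_i are finitely supported coefficient functions on exponent
vectors r :: nat => nat (r j is the exponent of X_j), supported on indices 1..i.
The function f stands for the sum over r of f r times 1/(X_1...X_i X_1^(r_1)...X_i^(r_i)).\<close>

definition Ecarrier :: "nat \<Rightarrow> ((nat \<Rightarrow> nat) \<Rightarrow> 'k::zero) set" where
  "Ecarrier i = {f. finite {r. f r \<noteq> 0} \<and>
     (\<forall>r. f r \<noteq> 0 \<longrightarrow> (\<forall>j. (j = 0 \<or> i < j) \<longrightarrow> r j = 0))}"

text \<open>X_j lowers r_j by one (killing basis elements with r_j = 0).\<close>
definition Xop :: "nat \<Rightarrow> ((nat \<Rightarrow> nat) \<Rightarrow> 'k::field) \<Rightarrow> ((nat \<Rightarrow> nat) \<Rightarrow> 'k)" where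
  "Xop j f = (\<lambda>r. f (r(j := Suc (r j))))"

text \<open>partial_j sends the basis element with exponent r_j to (-r_j-1) times the basis
element with exponent r_j+1.\<close>
definition Dop :: "nat \<Rightarrow> ((nat \<Rightarrow> nat) \<Rightarrow> 'k::field) \<Rightarrow> ((nat \<Rightarrow> nat) \<Rightarrow> 'k)" where
  "Dop j f = (\<lambda>r. - of_nat (r j) * f (r(j := r j - 1)))"

text \<open>Koszul complex of N (carrier M) w.r.t. commuting maps D j, j in the finite index
set J: p-chains assign to each p-subset S of J an element of M
(coefficient of e_S, with e_S the wedge of e_j, j in S in increasing order).\<close>
definition koszul_chains :: "nat set \<Rightarrow> 'v set \<Rightarrow> nat \<Rightarrow> (nat set \<Rightarrow> 'v::zero) set" where
  "koszul_chains J M p = {\<omega>. \<forall>S. (S \<subseteq> J \<and> card S = p \<longrightarrow> \<omega> S \<in> M) \<and>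
                                (\<not> (S \<subseteq> J \<and> card S = p) \<longrightarrow> \<omega> S = 0)}"

text \<open>d(e_{j_1} ... e_{j_p} x) = sum_k (-1)^(k+1) e_{..omit j_k..} (D j_k x).\<close>
definition koszul_d :: "nat set \<Rightarrow> (nat \<Rightarrow> 'v \<Rightarrow> 'v) \<Rightarrow> (nat set \<Rightarrow> 'v) \<Rightarrow> nat set \<Rightarrow> 'v::ab_group_add" where
  "koszul_d J D \<omega> T = (if T \<subseteq> J then
      (\<Sum>j\<in>J - T. if even (card {t\<in>T. t < j}) then D j (\<omega> (insert j T))
                   else - D j (\<omega> (insert j T)))
    else 0)"

definition koszul_homology_vanishes :: "nat set \<Rightarrow> (nat \<Rightarrow> 'v \<Rightarrow> 'v) \<Rightarrow> 'v::ab_group_add set \<Rightarrow> nat \<Rightarrow> bool" where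
  "koszul_homology_vanishes J D M p \<longleftrightarrow>
     (\<forall>\<omega>\<in>koszul_chains J M p. koszul_d J D \<omega> = 0 \<longrightarrow>
        (\<exists>\<eta>\<in>koszul_chains J M (Suc p). koszul_d J D \<eta> = \<omega>))"

text \<open>Boundaries in degree 0, viewed inside N (C_0 = N via omega |-> omega {}).\<close>
definition koszul_B0 :: "nat set \<Rightarrow> (nat \<Rightarrow> 'v \<Rightarrow> 'v) \<Rightarrow> 'v::ab_group_add set \<Rightarrow> 'v set" where
  "koszul_B0 J D M = {koszul_d J D \<eta> {} | \<eta>. \<eta> \<in> koszul_chains J M 1}"

end

theory Submission
  imports Defs
begin

text \<open>
  On E_n the derivation \<partial>_j is injective and its cokernel is spanned by the basis elements with
  r_j = 0, so the Koszul complex of \<partial>_c, ..., \<partial>_n is acyclic in positive degrees and has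
  H_0 = E_(c-1). This is realised by an explicit contracting homotopy. Call an index k \<in> J active
  at (S, r) if k \<in> S or r_k \<noteq> 0, i.e. if the weight r + 1_S is nonzero at k; the differential and
  the homotopy both preserve the weight. If the least active index j0 lies in S, the homotopy
  removes e_j0 from S and inverts \<partial>_j0 on that coordinate, i.e. divides by -(r_j0 + 1). Then
  dh + hd is the identity except on degree 0 coefficients whose exponent vanishes on J, which
  form a copy of E_(c-1); truncation to exponents supported below c realises H_0 \<cong> E_(c-1).
\<close>

lemma sum_fun_apply: "(\<Sum>j\<in>A. F j) x = (\<Sum>j\<in>A. F j x)"
  by (induction A rule: infinite_finite_induct) auto

lemma sum_eq_single:
  "finite A \<Longrightarrow> a \<in> A \<Longrightarrow> (\<And>j. j \<in> A \<Longrightarrow> j \<noteq> a \<Longrightarrow> g j = 0) \<Longrightarrow> sum g A = g a"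
  by (simp add: sum.remove sum.neutral)

lemma Ecarrier_finite_support: "f \<in> Ecarrier n \<Longrightarrow> finite {r. f r \<noteq> 0}"
  unfolding Ecarrier_def by simp

lemma Ecarrier_support:
  assumes "f \<in> Ecarrier n" "f r \<noteq> 0" "k = 0 \<or> n < k"
  shows "r k = 0"
proof -
  have "\<forall>r. f r \<noteq> 0 \<longrightarrow> (\<forall>j. j = 0 \<or> n < j \<longrightarrow> r j = 0)"
    using assms(1) by (simp add: Ecarrier_def)
  then show ?thesis using assms(2,3) by metis
qed

lemma EcarrierI:
  "finite {r. f r \<noteq> 0} \<Longrightarrow> (\<And>r k. f r \<noteq> 0 \<Longrightarrow> k = 0 \<or> n < k \<Longrightarrow> r k = 0) \<Longrightarrow> f \<in> Ecarrier n"
  unfolding Ecarrier_def by simp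

lemma Ecarrier_zero: "0 \<in> Ecarrier n"
  unfolding Ecarrier_def by simp

lemma Ecarrier_add:
  fixes f g :: "(nat \<Rightarrow> nat) \<Rightarrow> 'k::monoid_add"
  assumes f: "f \<in> Ecarrier n" and g: "g \<in> Ecarrier n"
  shows "f + g \<in> Ecarrier n"
proof (rule EcarrierI)
  have "{r. (f + g) r \<noteq> 0} \<subseteq> {r. f r \<noteq> 0} \<union> {r. g r \<noteq> 0}" by auto
  then show "finite {r. (f + g) r \<noteq> 0}"
    using f g by (auto intro: finite_subset Ecarrier_finite_support)
next
  fix r k assume "(f + g) r \<noteq> 0" "k = 0 \<or> n < k"
  moreover from this(1) have "f r \<noteq> 0 \<or> g r \<noteq> 0" by auto
  ultimately show "r k = 0"
    using Ecarrier_support[OF f] Ecarrier_support[OF g] by metis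
qed

lemma Ecarrier_sum:
  fixes g :: "'a \<Rightarrow> (nat \<Rightarrow> nat) \<Rightarrow> 'k::comm_monoid_add"
  shows "(\<And>j. j \<in> A \<Longrightarrow> g j \<in> Ecarrier n) \<Longrightarrow> sum g A \<in> Ecarrier n"
  by (induction A rule: infinite_finite_induct) (auto simp: Ecarrier_zero Ecarrier_add)

lemma Ecarrier_mono: "i \<le> n \<Longrightarrow> Ecarrier i \<subseteq> Ecarrier n"
  unfolding Ecarrier_def by auto

lemma Dop_Ecarrier:
  fixes f :: "(nat \<Rightarrow> nat) \<Rightarrow> 'k::field"
  assumes f: "f \<in> Ecarrier n" and j: "1 \<le> j" "j \<le> n"
  shows "Dop j f \<in> Ecarrier n"
proof (rule EcarrierI)
  have "{r. Dop j f r \<noteq> 0} \<subseteq> (\<lambda>u. u(j := Suc (u j))) ` {u. f u \<noteq> 0}"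
  proof
    fix r assume "r \<in> {r. Dop j f r \<noteq> 0}"
    then have r: "r j \<noteq> 0" "f (r(j := r j - 1)) \<noteq> 0" by (cases "r j = 0"; simp add: Dop_def)+
    then have "r = (r(j := r j - 1))(j := Suc ((r(j := r j - 1)) j))" by auto
    then show "r \<in> (\<lambda>u. u(j := Suc (u j))) ` {u. f u \<noteq> 0}" using r by blast
  qed
  then show "finite {r. Dop j f r \<noteq> 0}"
    using Ecarrier_finite_support[OF f] by (auto intro: finite_subset)
next
  fix r k assume "Dop j f r \<noteq> 0" "k = 0 \<or> n < k"
  moreover have "k \<noteq> j" using j \<open>k = 0 \<or> n < k\<close> by auto
  ultimately show "r k = 0"
    using Ecarrier_support[OF f, of "r(j := r j - 1)" k] by (auto simp: Dop_def)
qed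

lemma koszul_chains_mem: "\<omega> \<in> koszul_chains J M p \<Longrightarrow> 0 \<in> M \<Longrightarrow> \<omega> S \<in> M"
  unfolding koszul_chains_def by (cases "S \<subseteq> J \<and> card S = p") auto

lemma koszul_chains_outside:
  "\<omega> \<in> koszul_chains J M p \<Longrightarrow> \<not> (S \<subseteq> J \<and> card S = p) \<Longrightarrow> \<omega> S = 0"
  unfolding koszul_chains_def by blast

lemma koszul_d_outside: "\<not> T \<subseteq> J \<Longrightarrow> koszul_d J D \<omega> T = 0"
  unfolding koszul_d_def by simp

definition koszul_sign :: "nat set \<Rightarrow> nat \<Rightarrow> 'k::field" where
  "koszul_sign T j = (if even (card {t\<in>T. t < j}) then 1 else -1)"

lemma koszul_d_Dop_apply:
  assumes "T \<subseteq> J"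
  shows "koszul_d J Dop \<eta> T s =
    (\<Sum>j\<in>J - T. koszul_sign T j * (- of_nat (s j) * \<eta> (insert j T) (s(j := s j - 1))))"
  using assms unfolding koszul_d_def sum_fun_apply
  by (auto intro!: sum.cong simp: koszul_sign_def Dop_def)

lemma koszul_sign_eq_1:
  assumes "\<And>t. t \<in> T \<Longrightarrow> j \<le> t"
  shows "koszul_sign T j = 1"
proof -
  have "{t\<in>T. t < j} = {}" using assms by force
  then show ?thesis unfolding koszul_sign_def by (simp only: card.empty) simp
qed

lemma koszul_sign_Diff:
  assumes "finite T" "j0 \<in> T" "j0 < j"
  shows "koszul_sign (T - {j0}) j = - koszul_sign T j"
proof -
  have "{t\<in>T. t < j} = insert j0 {t\<in>T - {j0}. t < j}" using assms by auto
  then have "card {t\<in>T. t < j} = Suc (card {t\<in>T - {j0}. t < j})" using assms(1) by simp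
  then show ?thesis unfolding koszul_sign_def by auto
qed

definition weight :: "nat set \<Rightarrow> (nat \<Rightarrow> nat) \<Rightarrow> nat \<Rightarrow> nat" where
  "weight S r = (\<lambda>k. r k + (if k \<in> S then 1 else 0))"

definition lead_index :: "nat set \<Rightarrow> (nat \<Rightarrow> nat) \<Rightarrow> nat" where
  "lead_index J w = (LEAST k. k \<in> J \<and> w k \<noteq> 0)"

definition contraction ::
    "nat set \<Rightarrow> (nat set \<Rightarrow> (nat \<Rightarrow> nat) \<Rightarrow> 'k::field) \<Rightarrow> nat set \<Rightarrow> (nat \<Rightarrow> nat) \<Rightarrow> 'k" where
  "contraction J \<omega> S r =
    (let j0 = lead_index J (weight S r) in
     if S \<subseteq> J \<and> (\<exists>k\<in>J. weight S r k \<noteq> 0) \<and> j0 \<in> S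
     then - \<omega> (S - {j0}) (r(j0 := Suc (r j0))) / of_nat (Suc (r j0)) else 0)"

lemma weight_insert: "j \<notin> T \<Longrightarrow> s j \<noteq> 0 \<Longrightarrow> weight (insert j T) (s(j := s j - 1)) = weight T s"
  unfolding weight_def by auto

lemma weight_nonzero: "t \<in> T \<Longrightarrow> weight T s t \<noteq> 0"
  unfolding weight_def by simp

lemma lead_index_in: "\<exists>k\<in>J. w k \<noteq> 0 \<Longrightarrow> lead_index J w \<in> J \<and> w (lead_index J w) \<noteq> 0"
  unfolding lead_index_def by (rule LeastI_ex) auto

lemma lead_index_le: "k \<in> J \<Longrightarrow> w k \<noteq> 0 \<Longrightarrow> lead_index J w \<le> k"
  unfolding lead_index_def by (rule Least_le) auto

lemma koszul_sign_lead_index: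
  "T \<subseteq> J \<Longrightarrow> T' \<subseteq> T \<Longrightarrow> koszul_sign T' (lead_index J (weight T s)) = 1"
  by (rule koszul_sign_eq_1) (use lead_index_le weight_nonzero in blast)

lemma contraction_eq:
  "S \<subseteq> J \<Longrightarrow> \<exists>k\<in>J. weight S r k \<noteq> 0 \<Longrightarrow> lead_index J (weight S r) = j0 \<Longrightarrow> j0 \<in> S \<Longrightarrow>
   contraction J \<omega> S r = - \<omega> (S - {j0}) (r(j0 := Suc (r j0))) / of_nat (Suc (r j0))"
  unfolding contraction_def Let_def by auto

lemma contraction_eq_0:
  "\<not> (S \<subseteq> J \<and> (\<exists>k\<in>J. weight S r k \<noteq> 0) \<and> lead_index J (weight S r) \<in> S) \<Longrightarrow>
   contraction J \<omega> S r = 0"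
  unfolding contraction_def Let_def by auto

lemma contraction_zero: "contraction J 0 = 0"
  unfolding contraction_def by (simp add: fun_eq_iff Let_def)

lemma contraction_homotopy_inactive:
  fixes \<omega> :: "nat set \<Rightarrow> (nat \<Rightarrow> nat) \<Rightarrow> 'k::field"
  assumes "T \<subseteq> J" "\<not> (\<exists>k\<in>J. weight T s k \<noteq> 0)"
  shows "koszul_d J Dop (contraction J \<omega>) T s + contraction J (koszul_d J Dop \<omega>) T s = 0"
proof -
  have "s j = 0" if "j \<in> J" for j using assms(2) that by (auto simp: weight_def)
  then have "koszul_d J Dop (contraction J \<omega>) T s = 0"
    by (simp add: koszul_d_Dop_apply[OF assms(1)])
  moreover have "contraction J (koszul_d J Dop \<omega>) T s = 0"
    using assms(2) by (simp add: contraction_eq_0)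
  ultimately show ?thesis by simp
qed

lemma contraction_homotopy_lead_notin:
  fixes \<omega> :: "nat set \<Rightarrow> (nat \<Rightarrow> nat) \<Rightarrow> 'k::field_char_0"
  assumes J: "finite J" and T: "T \<subseteq> J" and active: "\<exists>k\<in>J. weight T s k \<noteq> 0"
    and j0: "lead_index J (weight T s) = j0" "j0 \<notin> T"
  shows "koszul_d J Dop (contraction J \<omega>) T s + contraction J (koszul_d J Dop \<omega>) T s = \<omega> T s"
proof -
  have j0J: "j0 \<in> J" and "weight T s j0 \<noteq> 0" using lead_index_in[OF active] j0(1) by auto
  then have sj0: "s j0 \<noteq> 0" using j0(2) by (simp add: weight_def)
  have w: "weight (insert j0 T) (s(j0 := s j0 - 1)) = weight T s"
    using j0(2) sj0 by (rule weight_insert)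
  have other: "koszul_sign T j * (- of_nat (s j) * contraction J \<omega> (insert j T) (s(j := s j - 1))) = 0"
    if "j \<in> J - T" "j \<noteq> j0" for j
  proof (cases "s j = 0")
    case False
    then have "weight (insert j T) (s(j := s j - 1)) = weight T s"
      using that by (intro weight_insert) auto
    then have "contraction J \<omega> (insert j T) (s(j := s j - 1)) = 0"
      by (intro contraction_eq_0) (use that j0 in auto)
    then show ?thesis by simp
  qed simp
  have "koszul_d J Dop (contraction J \<omega>) T s =
      koszul_sign T j0 * (- of_nat (s j0) * contraction J \<omega> (insert j0 T) (s(j0 := s j0 - 1)))"
    unfolding koszul_d_Dop_apply[OF T]
    by (rule sum_eq_single) (use J j0J j0(2) other in auto)
  also have "koszul_sign T j0 = (1::'k)"
    using koszul_sign_lead_index[OF T subset_refl, of s] j0(1) by simp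
  also have "contraction J \<omega> (insert j0 T) (s(j0 := s j0 - 1)) =
      - \<omega> (insert j0 T - {j0}) ((s(j0 := s j0 - 1))(j0 := Suc ((s(j0 := s j0 - 1)) j0)))
      / of_nat (Suc ((s(j0 := s j0 - 1)) j0))"
    by (rule contraction_eq) (unfold w, use T j0J active j0 in auto)
  also have "\<dots> = - \<omega> T s / of_nat (s j0)"
  proof -
    have "insert j0 T - {j0} = T" using j0(2) by auto
    then show ?thesis using sj0 by simp
  qed
  finally have "koszul_d J Dop (contraction J \<omega>) T s = \<omega> T s" using sj0 by simp
  moreover have "contraction J (koszul_d J Dop \<omega>) T s = 0"
    using j0 by (intro contraction_eq_0) simp
  ultimately show ?thesis by simp
qed

lemma koszul_d_contraction_lead_in:
  fixes \<omega> :: "nat set \<Rightarrow> (nat \<Rightarrow> nat) \<Rightarrow> 'k::field"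
  assumes T: "T \<subseteq> J" and active: "\<exists>k\<in>J. weight T s k \<noteq> 0"
    and j0: "lead_index J (weight T s) = j0" "j0 \<in> T"
  defines "N \<equiv> of_nat (Suc (s j0)) :: 'k"
  shows "koszul_d J Dop (contraction J \<omega>) T s =
    (\<Sum>j\<in>J - T. koszul_sign T j *
       (of_nat (s j) * \<omega> (insert j (T - {j0})) (s(j := s j - 1, j0 := Suc (s j0))))) / N"
  unfolding koszul_d_Dop_apply[OF T] sum_divide_distrib
proof (rule sum.cong[OF refl])
  fix j assume j: "j \<in> J - T"
  then have jj0: "j \<noteq> j0" using j0 by auto
  show "koszul_sign T j * (- of_nat (s j) * contraction J \<omega> (insert j T) (s(j := s j - 1))) =
    koszul_sign T j * (of_nat (s j) * \<omega> (insert j (T - {j0})) (s(j := s j - 1, j0 := Suc (s j0)))) / N"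
  proof (cases "s j = 0")
    case False
    have w: "weight (insert j T) (s(j := s j - 1)) = weight T s"
      using j False by (intro weight_insert) auto
    have "contraction J \<omega> (insert j T) (s(j := s j - 1)) =
        - \<omega> (insert j T - {j0}) ((s(j := s j - 1))(j0 := Suc ((s(j := s j - 1)) j0)))
        / of_nat (Suc ((s(j := s j - 1)) j0))"
      by (rule contraction_eq) (unfold w, use j j0 T active in auto)
    also have "\<dots> = - \<omega> (insert j (T - {j0})) (s(j := s j - 1, j0 := Suc (s j0))) / N"
      using jj0 by (simp add: N_def insert_Diff_if)
    finally show ?thesis by simp
  qed simp
qed

lemma koszul_d_at_lead_removed:
  fixes \<omega> :: "nat set \<Rightarrow> (nat \<Rightarrow> nat) \<Rightarrow> 'k::field"
  assumes J: "finite J" and T: "T \<subseteq> J" and j0: "lead_index J (weight T s) = j0" "j0 \<in> T"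
  defines "s' \<equiv> s(j0 := Suc (s j0))"
  shows "koszul_d J Dop \<omega> (T - {j0}) s' = - of_nat (Suc (s j0)) * \<omega> T s +
    (\<Sum>j\<in>J - T. koszul_sign T j *
       (of_nat (s j) * \<omega> (insert j (T - {j0})) (s(j := s j - 1, j0 := Suc (s j0)))))"
proof -
  have T': "T - {j0} \<subseteq> J" using T by auto
  have "J - (T - {j0}) = insert j0 (J - T)" using j0 T by auto
  then have "koszul_d J Dop \<omega> (T - {j0}) s' =
      koszul_sign (T - {j0}) j0 * (- of_nat (s' j0) * \<omega> (insert j0 (T - {j0})) (s'(j0 := s' j0 - 1)))
      + (\<Sum>j\<in>J - T. koszul_sign (T - {j0}) j * (- of_nat (s' j) * \<omega> (insert j (T - {j0})) (s'(j := s' j - 1))))"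
    unfolding koszul_d_Dop_apply[OF T'] by (simp only:) (rule sum.insert, use J j0(2) in auto)
  also have "koszul_sign (T - {j0}) j0 = (1::'k)"
    using koszul_sign_lead_index[OF T, of "T - {j0}" s] j0(1) by auto
  also have "(\<Sum>j\<in>J - T. koszul_sign (T - {j0}) j * (- of_nat (s' j) * \<omega> (insert j (T - {j0})) (s'(j := s' j - 1))))
      = (\<Sum>j\<in>J - T. koszul_sign T j * (of_nat (s j) * \<omega> (insert j (T - {j0})) (s(j := s j - 1, j0 := Suc (s j0)))))"
  proof (rule sum.cong[OF refl])
    fix j assume j: "j \<in> J - T"
    then have jj0: "j \<noteq> j0" using j0 by auto
    show "koszul_sign (T - {j0}) j * (- of_nat (s' j) * \<omega> (insert j (T - {j0})) (s'(j := s' j - 1))) =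
      koszul_sign T j * (of_nat (s j) * \<omega> (insert j (T - {j0})) (s(j := s j - 1, j0 := Suc (s j0))))"
    proof (cases "s j = 0")
      case False
      then have "j0 \<le> j" using j j0(1) lead_index_le[of j J "weight T s"] by (simp add: weight_def)
      then have "koszul_sign (T - {j0}) j = - (koszul_sign T j :: 'k)"
        using jj0 J T j0(2) by (intro koszul_sign_Diff) (auto intro: finite_subset)
      moreover have "s'(j := s' j - 1) = s(j := s j - 1, j0 := Suc (s j0))"
        using jj0 by (simp add: s'_def fun_upd_twist)
      ultimately show ?thesis using jj0 by (simp add: s'_def)
    qed (use jj0 in \<open>simp add: s'_def\<close>)
  qed
  also have "s'(j0 := s' j0 - 1) = s" by (simp add: s'_def)
  also have "s' j0 = Suc (s j0)" by (simp add: s'_def)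
  also have "insert j0 (T - {j0}) = T" using j0(2) by auto
  finally show ?thesis by (simp only: mult_1_left)
qed

lemma contraction_koszul_d_lead_in:
  fixes \<omega> :: "nat set \<Rightarrow> (nat \<Rightarrow> nat) \<Rightarrow> 'k::field_char_0"
  assumes J: "finite J" and T: "T \<subseteq> J" and active: "\<exists>k\<in>J. weight T s k \<noteq> 0"
    and j0: "lead_index J (weight T s) = j0" "j0 \<in> T"
  defines "N \<equiv> of_nat (Suc (s j0)) :: 'k"
  shows "contraction J (koszul_d J Dop \<omega>) T s = \<omega> T s -
    (\<Sum>j\<in>J - T. koszul_sign T j *
       (of_nat (s j) * \<omega> (insert j (T - {j0})) (s(j := s j - 1, j0 := Suc (s j0))))) / N"
proof -
  have "contraction J (koszul_d J Dop \<omega>) T s =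
      - koszul_d J Dop \<omega> (T - {j0}) (s(j0 := Suc (s j0))) / N"
    unfolding N_def by (rule contraction_eq) (use T active j0 in auto)
  also have "koszul_d J Dop \<omega> (T - {j0}) (s(j0 := Suc (s j0))) = - N * \<omega> T s +
    (\<Sum>j\<in>J - T. koszul_sign T j *
       (of_nat (s j) * \<omega> (insert j (T - {j0})) (s(j := s j - 1, j0 := Suc (s j0)))))"
    unfolding N_def by (rule koszul_d_at_lead_removed[OF J T j0])
  moreover have "N \<noteq> 0" unfolding N_def of_nat_eq_0_iff by simp
  ultimately show ?thesis by (simp add: field_simps)
qed

lemma contraction_homotopy:
  fixes \<omega> :: "nat set \<Rightarrow> (nat \<Rightarrow> nat) \<Rightarrow> 'k::field_char_0"
  assumes "finite J"
  shows "koszul_d J Dop (contraction J \<omega>) T s + contraction J (koszul_d J Dop \<omega>) T s =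
    (if T \<subseteq> J \<and> (\<exists>k\<in>J. weight T s k \<noteq> 0) then \<omega> T s else 0)"
proof (cases "T \<subseteq> J \<and> (\<exists>k\<in>J. weight T s k \<noteq> 0)")
  case True
  then have T: "T \<subseteq> J" and active: "\<exists>k\<in>J. weight T s k \<noteq> 0" by auto
  show ?thesis
  proof (cases "lead_index J (weight T s) \<in> T")
    case True
    show ?thesis
      unfolding koszul_d_contraction_lead_in[OF T active refl True]
        contraction_koszul_d_lead_in[OF assms T active refl True]
      using T active by simp
  qed (use contraction_homotopy_lead_notin[OF assms T active refl] T active in simp)
next
  case inactive: False
  show ?thesis
  proof (cases "T \<subseteq> J")
    case True
    then show ?thesis using contraction_homotopy_inactive[OF True] inactive by auto
  qed (simp add: koszul_d_outside contraction_eq_0)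
qed

lemma koszul_d_contraction_cycle:
  fixes \<omega> :: "nat set \<Rightarrow> (nat \<Rightarrow> nat) \<Rightarrow> 'k::field_char_0"
  assumes "finite J" and cycle: "koszul_d J Dop \<omega> = 0"
    and outside: "\<And>T. \<not> T \<subseteq> J \<Longrightarrow> \<omega> T = 0"
    and degree_0: "\<And>s. (\<forall>k\<in>J. s k = 0) \<Longrightarrow> \<omega> {} s = 0"
  shows "koszul_d J Dop (contraction J \<omega>) = \<omega>"
proof (intro ext)
  fix T s
  have "koszul_d J Dop (contraction J \<omega>) T s =
      (if T \<subseteq> J \<and> (\<exists>k\<in>J. weight T s k \<noteq> 0) then \<omega> T s else 0)"
    using contraction_homotopy[OF assms(1), of \<omega> T s] by (simp add: cycle contraction_zero)
  also have "\<dots> = \<omega> T s"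
  proof (cases "T \<subseteq> J")
    case True
    moreover have "T = {} \<and> (\<forall>k\<in>J. s k = 0)" if "\<forall>k\<in>J. weight T s k = 0"
      using that True weight_nonzero by (fastforce simp: weight_def)
    ultimately show ?thesis using degree_0 by auto
  qed (simp add: outside)
  finally show "koszul_d J Dop (contraction J \<omega>) T s = \<omega> T s" .
qed

lemma contraction_nonzero:
  assumes "contraction J \<omega> S r \<noteq> 0"
  obtains j0 where "j0 \<in> S" "S \<subseteq> J" "\<omega> (S - {j0}) (r(j0 := Suc (r j0))) \<noteq> 0"
  using assms unfolding contraction_def Let_def by (auto split: if_splits)

lemma contraction_Ecarrier:
  fixes \<omega> :: "nat set \<Rightarrow> (nat \<Rightarrow> nat) \<Rightarrow> 'k::field"
  assumes J: "finite J" "J \<subseteq> {1..n}" and \<omega>: "\<And>S. \<omega> S \<in> Ecarrier n"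
  shows "contraction J \<omega> S \<in> Ecarrier n"
proof (rule EcarrierI)
  have "{r. contraction J \<omega> S r \<noteq> 0} \<subseteq>
      (\<Union>j\<in>J. (\<lambda>u. u(j := u j - 1)) ` {u. \<omega> (S - {j}) u \<noteq> 0})"
  proof
    fix r assume "r \<in> {r. contraction J \<omega> S r \<noteq> 0}"
    then have "contraction J \<omega> S r \<noteq> 0" by simp
    then obtain j0 where j0: "j0 \<in> S" "S \<subseteq> J" "\<omega> (S - {j0}) (r(j0 := Suc (r j0))) \<noteq> 0"
      by (rule contraction_nonzero)
    have "r \<in> (\<lambda>u. u(j0 := u j0 - 1)) ` {u. \<omega> (S - {j0}) u \<noteq> 0}"
      by (rule image_eqI[where x = "r(j0 := Suc (r j0))"]) (use j0(3) in simp_all)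
    moreover have "j0 \<in> J" using j0(1,2) by (rule subsetD[rotated])
    ultimately show "r \<in> (\<Union>j\<in>J. (\<lambda>u. u(j := u j - 1)) ` {u. \<omega> (S - {j}) u \<noteq> 0})"
      by (intro UN_I)
  qed
  moreover have "finite (\<Union>j\<in>J. (\<lambda>u. u(j := u j - 1)) ` {u. \<omega> (S - {j}) u \<noteq> 0})"
    by (intro finite_UN_I J(1) finite_imageI Ecarrier_finite_support[OF \<omega>])
  ultimately show "finite {r. contraction J \<omega> S r \<noteq> 0}" by (rule finite_subset)
next
  fix r k assume nonzero: "contraction J \<omega> S r \<noteq> 0" and k: "k = 0 \<or> n < k"
  from nonzero obtain j0 where j0: "j0 \<in> S" "S \<subseteq> J" "\<omega> (S - {j0}) (r(j0 := Suc (r j0))) \<noteq> 0"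
    by (rule contraction_nonzero)
  have "j0 \<in> J" using j0(1,2) by (rule subsetD[rotated])
  then have "j0 \<in> {1..n}" by (rule subsetD[OF J(2)])
  then have "k \<noteq> j0" using k by auto
  moreover have "(r(j0 := Suc (r j0))) k = 0"
    by (rule Ecarrier_support[of "\<omega> (S - {j0})" n]) (fact \<omega> j0(3) k)+
  ultimately show "r k = 0" by simp
qed

lemma contraction_koszul_chains:
  fixes \<omega> :: "nat set \<Rightarrow> (nat \<Rightarrow> nat) \<Rightarrow> 'k::field"
  assumes J: "finite J" "J \<subseteq> {1..n}" and \<omega>: "\<omega> \<in> koszul_chains J (Ecarrier n) p"
  shows "contraction J \<omega> \<in> koszul_chains J (Ecarrier n) (Suc p)"
proof -
  have in_E: "contraction J \<omega> S \<in> Ecarrier n" for S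
    using J koszul_chains_mem[OF \<omega> Ecarrier_zero] by (rule contraction_Ecarrier)
  have "S \<subseteq> J \<and> card S = Suc p" if nonzero: "contraction J \<omega> S r \<noteq> 0" for S r
  proof -
    obtain j0 where j0: "j0 \<in> S" "S \<subseteq> J" "\<omega> (S - {j0}) (r(j0 := Suc (r j0))) \<noteq> 0"
      using nonzero by (rule contraction_nonzero)
    then have "\<omega> (S - {j0}) \<noteq> 0" by auto
    then have "card (S - {j0}) = p" using koszul_chains_outside[OF \<omega>, of "S - {j0}"] by auto
    moreover have "finite S" using j0(2) J(1) by (rule finite_subset)
    ultimately show ?thesis using j0(1,2) by (metis card_Suc_Diff1)
  qed
  then have "contraction J \<omega> S = 0" if "\<not> (S \<subseteq> J \<and> card S = Suc p)" for S
    using that by (auto simp: fun_eq_iff)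
  with in_E show ?thesis unfolding koszul_chains_def by blast
qed

lemma koszul_homology_vanishes_Ecarrier:
  assumes J: "finite J" "J \<subseteq> {1..n}" and "0 < p"
  shows "koszul_homology_vanishes J Dop (Ecarrier n :: ((nat \<Rightarrow> nat) \<Rightarrow> 'k::field_char_0) set) p"
  unfolding koszul_homology_vanishes_def
proof (intro ballI impI)
  fix \<omega> :: "nat set \<Rightarrow> (nat \<Rightarrow> nat) \<Rightarrow> 'k"
  assume \<omega>: "\<omega> \<in> koszul_chains J (Ecarrier n) p" and cycle: "koszul_d J Dop \<omega> = 0"
  have "koszul_d J Dop (contraction J \<omega>) = \<omega>"
    by (rule koszul_d_contraction_cycle[OF J(1) cycle])
      (use koszul_chains_outside[OF \<omega>] \<open>0 < p\<close> in auto)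
  with contraction_koszul_chains[OF J \<omega>]
  show "\<exists>\<eta>\<in>koszul_chains J (Ecarrier n) (Suc p). koszul_d J Dop \<eta> = \<omega>" by blast
qed

definition E_truncate :: "nat \<Rightarrow> ((nat \<Rightarrow> nat) \<Rightarrow> 'k::zero) \<Rightarrow> ((nat \<Rightarrow> nat) \<Rightarrow> 'k)" where
  "E_truncate c f = (\<lambda>r. if \<forall>k\<ge>c. r k = 0 then f r else 0)"

lemma E_truncate_Ecarrier:
  assumes f: "f \<in> Ecarrier n"
  shows "E_truncate c f \<in> Ecarrier (c - 1)"
proof (rule EcarrierI)
  have "{r. E_truncate c f r \<noteq> 0} \<subseteq> {r. f r \<noteq> 0}" by (auto simp: E_truncate_def)
  then show "finite {r. E_truncate c f r \<noteq> 0}"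
    using Ecarrier_finite_support[OF f] by (rule finite_subset)
next
  fix r k assume nonzero: "E_truncate c f r \<noteq> 0" and k: "k = 0 \<or> c - 1 < k"
  then have "f r \<noteq> 0" and "\<forall>k\<ge>c. r k = 0" by (auto simp: E_truncate_def split: if_splits)
  then show "r k = 0"
    using Ecarrier_support[of f n r k] f k by (cases "k = 0") auto
qed

lemma E_truncate_id:
  assumes g: "g \<in> Ecarrier (c - 1)"
  shows "E_truncate c g = g"
proof
  fix r
  have "g r = 0" if "c \<le> k" "r k \<noteq> 0" for k
    using Ecarrier_support[of g "c - 1" r k] g that by fastforce
  then show "E_truncate c g r = g r" by (auto simp: E_truncate_def)
qed

lemma E_truncate_image:
  assumes "c \<le> Suc n"
  shows "E_truncate c ` Ecarrier n = Ecarrier (c - 1)"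
proof
  show "E_truncate c ` Ecarrier n \<subseteq> Ecarrier (c - 1)"
    using E_truncate_Ecarrier by blast
  show "Ecarrier (c - 1) \<subseteq> E_truncate c ` Ecarrier n"
  proof
    fix g assume g: "g \<in> Ecarrier (c - 1)"
    moreover have "Ecarrier (c - 1) \<subseteq> Ecarrier n" using assms by (intro Ecarrier_mono) simp
    ultimately show "g \<in> E_truncate c ` Ecarrier n"
      using E_truncate_id[OF g] by (metis image_eqI subsetD)
  qed
qed

lemma E_truncate_Xop: "j < c \<Longrightarrow> E_truncate c (Xop j f) = Xop j (E_truncate c f)"
  by (auto simp: E_truncate_def Xop_def fun_eq_iff)

lemma E_truncate_Dop: "j < c \<Longrightarrow> E_truncate c (Dop j f) = Dop j (E_truncate c f)"
  by (auto simp: E_truncate_def Dop_def fun_eq_iff)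

lemma koszul_B0_in_truncate_kernel:
  assumes "1 \<le> c" and f: "f \<in> koszul_B0 {c..n} Dop (Ecarrier n :: ((nat \<Rightarrow> nat) \<Rightarrow> 'k::field) set)"
  shows "f \<in> Ecarrier n" and "E_truncate c f = 0"
proof -
  obtain \<eta> where \<eta>: "\<eta> \<in> koszul_chains {c..n} (Ecarrier n) 1" and f_eq: "f = koszul_d {c..n} Dop \<eta> {}"
    using f unfolding koszul_B0_def by blast
  have "koszul_d {c..n} Dop \<eta> {} = (\<Sum>j\<in>{c..n}. Dop j (\<eta> {j}))"
    by (simp add: koszul_d_def)
  also have "\<dots> \<in> Ecarrier n"
    using assms(1) by (intro Ecarrier_sum Dop_Ecarrier koszul_chains_mem[OF \<eta> Ecarrier_zero]) auto
  finally show "f \<in> Ecarrier n" unfolding f_eq .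
  have "f r = 0" if "\<forall>k\<ge>c. r k = 0" for r
    using that unfolding f_eq koszul_d_Dop_apply[OF empty_subsetI] by (auto intro!: sum.neutral)
  then show "E_truncate c f = 0" by (auto simp: E_truncate_def fun_eq_iff)
qed

lemma truncate_kernel_in_koszul_B0:
  fixes f :: "(nat \<Rightarrow> nat) \<Rightarrow> 'k::field_char_0"
  assumes "1 \<le> c" and f: "f \<in> Ecarrier n" and trunc: "E_truncate c f = 0"
  shows "f \<in> koszul_B0 {c..n} Dop (Ecarrier n)"
proof -
  define \<omega> where "\<omega> S = (if S = {} then f else 0)" for S :: "nat set"
  have J: "finite {c..n}" "{c..n} \<subseteq> {1..n}" using assms(1) by auto
  have \<omega>_chain: "\<omega> \<in> koszul_chains {c..n} (Ecarrier n) 0"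
    using f J(1) by (auto simp: koszul_chains_def \<omega>_def Ecarrier_zero intro: finite_subset)
  have \<omega>_insert: "\<omega> (insert j T) = 0" for j T by (simp add: \<omega>_def)
  have "koszul_d {c..n} Dop \<omega> T s = 0" for T s
    by (cases "T \<subseteq> {c..n}") (simp_all add: koszul_d_Dop_apply \<omega>_insert koszul_d_outside)
  then have "koszul_d {c..n} Dop \<omega> = 0" by (simp add: fun_eq_iff)
  moreover have "f s = 0" if "\<forall>k\<in>{c..n}. s k = 0" for s
  proof (cases "\<forall>k\<ge>c. s k = 0")
    case True
    then show ?thesis using fun_cong[OF trunc, of s] by (simp add: E_truncate_def)
  next
    case False
    then obtain k where "c \<le> k" "s k \<noteq> 0" by auto
    then show ?thesis using that Ecarrier_support[of f n s k] f by fastforce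
  qed
  ultimately have "koszul_d {c..n} Dop (contraction {c..n} \<omega>) = \<omega>"
    using J(1) by (intro koszul_d_contraction_cycle) (auto simp: \<omega>_def)
  then have "f = koszul_d {c..n} Dop (contraction {c..n} \<omega>) {}" by (simp add: \<omega>_def)
  with contraction_koszul_chains[OF J \<omega>_chain] show ?thesis
    unfolding koszul_B0_def by auto
qed

lemma koszul_B0_Ecarrier_eq_truncate_kernel:
  fixes c n :: nat
  assumes "1 \<le> c"
  shows "koszul_B0 {c..n} Dop (Ecarrier n) = {f \<in> Ecarrier n. E_truncate c f = (0 :: _ \<Rightarrow> 'k::field_char_0)}"
  using koszul_B0_in_truncate_kernel[OF assms] truncate_kernel_in_koszul_B0[OF assms] by blast

theorem lemma2p2:
  fixes n c :: nat
  assumes "1 \<le> c" and "c \<le> n"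
  shows "(\<forall>i>0. koszul_homology_vanishes {c..n} Dop
              (Ecarrier n :: ((nat \<Rightarrow> nat) \<Rightarrow> 'k::field_char_0) set) i)
    \<and> (\<exists>\<phi> :: ((nat \<Rightarrow> nat) \<Rightarrow> 'k) \<Rightarrow> ((nat \<Rightarrow> nat) \<Rightarrow> 'k).
          (\<forall>f\<in>Ecarrier n. \<forall>g\<in>Ecarrier n. \<forall>a b.
              \<phi> (\<lambda>r. a * f r + b * g r) = (\<lambda>r. a * \<phi> f r + b * \<phi> g r))
        \<and> \<phi> ` Ecarrier n = Ecarrier (c - 1)
        \<and> {f\<in>Ecarrier n. \<phi> f = 0} = koszul_B0 {c..n} Dop (Ecarrier n)
        \<and> (\<forall>j\<in>{1..<c}. \<forall>f\<in>Ecarrier n.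
              \<phi> (Xop j f) = Xop j (\<phi> f) \<and> \<phi> (Dop j f) = Dop j (\<phi> f)))"
proof (intro conjI allI impI exI[of _ "E_truncate c"])
  fix i :: nat assume "0 < i"
  then show "koszul_homology_vanishes {c..n} Dop (Ecarrier n :: ((nat \<Rightarrow> nat) \<Rightarrow> 'k) set) i"
    using assms(1) by (intro koszul_homology_vanishes_Ecarrier) auto
next
  show "\<forall>f\<in>Ecarrier n. \<forall>g\<in>Ecarrier n. \<forall>a b. E_truncate c (\<lambda>r. a * f r + b * g r) =
      (\<lambda>r. a * E_truncate c f r + b * E_truncate c g r :: 'k)"
    by (auto simp: E_truncate_def fun_eq_iff)
  show "E_truncate c ` Ecarrier n = (Ecarrier (c - 1) :: ((nat \<Rightarrow> nat) \<Rightarrow> 'k) set)"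
    using assms(2) by (intro E_truncate_image) simp
  show "{f \<in> Ecarrier n. E_truncate c f = 0} = koszul_B0 {c..n} Dop (Ecarrier n :: ((nat \<Rightarrow> nat) \<Rightarrow> 'k) set)"
    by (rule koszul_B0_Ecarrier_eq_truncate_kernel[OF assms(1), symmetric])
  show "\<forall>j\<in>{1..<c}. \<forall>f\<in>Ecarrier n. E_truncate c (Xop j f) = Xop j (E_truncate c f)
      \<and> E_truncate c (Dop j f) = Dop j (E_truncate c (f :: (nat \<Rightarrow> nat) \<Rightarrow> 'k))"
    by (simp add: E_truncate_Xop E_truncate_Dop)
qed

end
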